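(* Let $n\ge 3$ and let $PC_n$ be any polyomino chain with $n$ squares. Then $$ZC_1(Li_n)\le ZC_1(PC_n)\le ZC_1(Z_n),$$ with equality on the left if and only if $PC_n=Li_n$ and equality on the right if and only if $PC_n=Z_n$. Moreover, $ZC_1(Li_n)=32n-44$ for $n\ge 3$ and $ZC_1(Z_n)=50n-92$ for $n\ge 4$.
   Context: A polyomino chain $PC_n$ with $n$ squares is a sequence of unit squares $S_1,\dots,S_n$ in the plane in which consecutive squares share exactly one edge and the centers of consecutive squares form a path; it is regarded as the graph whose vertices are the corners of the squares and whose edges are the sides of the squares. For $3\le k\le n$, the link $L_k\in\{1,2\}$ is $1$ if $S_{k-2},S_{k-1},S_k$ lie on a straight line and $2$ otherwise (the chain turns at $S_{k-1}$). The linear chain $Li_n$ is the chain with all $L_k=1$ ($n$ squares in a row); the zigzag chain $Z_n$ is the staircase chain with all $L_k=2$ (all segments, i.e. maximal straight subchains, of length 2). For a vertex $v$, $\tau_v$ is the number of vertices at distance exactly $2$ from $v$, and $ZC_1(G)=\sum_{v\in V(G)}\tau_v^2$. *)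

theory Defs
  imports Main
begin

text \<open>A square is identified with its lower-left corner (an integer lattice point).
  A polyomino chain with n squares is a list of n squares S_1..S_n (list index 0..n-1).\<close>

type_synonym square = "int \<times> int"

definition corners :: "square \<Rightarrow> (int \<times> int) set" where
  "corners s = {(fst s, snd s), (fst s + 1, snd s), (fst s, snd s + 1), (fst s + 1, snd s + 1)}"

text \<open>Polyomino chain: consecutive squares share exactly one edge (their lower-left corners
  are at lattice distance 1); the squares are distinct; non-consecutive squares share no edge,
  and squares that are at least 3 apart in the chain are disjoint (no common corner), so that
  the adjacency graph of squares is a path and the region has no holes.\<close>
definition is_polyomino_chain :: "square list \<Rightarrow> bool" where
  "is_polyomino_chain S \<longleftrightarrow>
     (\<forall>i. Suc i < length S \<longrightarrow>
        \<bar>fst (S!i) - fst (S!Suc i)\<bar> + \<bar>snd (S!i) - snd (S!Suc i)\<bar> = 1) \<and>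
     (\<forall>i j. i + 2 = j \<and> j < length S \<longrightarrow> S!i \<noteq> S!j) \<and>
     (\<forall>i j. i + 3 \<le> j \<and> j < length S \<longrightarrow>
        max \<bar>fst (S!i) - fst (S!j)\<bar> \<bar>snd (S!i) - snd (S!j)\<bar> \<ge> 2)"

text \<open>Link L_k for the squares with list indices k-2, k-1, k (2 \<le> k < length S):
  1 if they lie on a straight line, 2 otherwise.\<close>
definition link :: "square list \<Rightarrow> nat \<Rightarrow> nat" where
  "link S k = (if fst (S!k) - fst (S!(k-1)) = fst (S!(k-1)) - fst (S!(k-2)) \<and>
                  snd (S!k) - snd (S!(k-1)) = snd (S!(k-1)) - snd (S!(k-2)) then 1 else 2)"

definition chain_vertices :: "square list \<Rightarrow> (int \<times> int) set" where
  "chain_vertices S = (\<Union>s\<in>set S. corners s)"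

definition chain_adj :: "square list \<Rightarrow> int \<times> int \<Rightarrow> int \<times> int \<Rightarrow> bool" where
  "chain_adj S p q \<longleftrightarrow> (\<exists>s\<in>set S. p \<in> corners s \<and> q \<in> corners s \<and>
      \<bar>fst p - fst q\<bar> + \<bar>snd p - snd q\<bar> = 1)"

definition tau :: "square list \<Rightarrow> int \<times> int \<Rightarrow> nat" where
  "tau S v = card {u \<in> chain_vertices S. u \<noteq> v \<and> \<not> chain_adj S v u \<and>
                     (\<exists>w \<in> chain_vertices S. chain_adj S v w \<and> chain_adj S w u)}"

definition ZC1 :: "square list \<Rightarrow> nat" where
  "ZC1 S = (\<Sum>v\<in>chain_vertices S. (tau S v)^2)"

definition Li :: "nat \<Rightarrow> square list" where
  "Li n = map (\<lambda>i. (int i, 0)) [0..<n]"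

definition Zz :: "nat \<Rightarrow> square list" where
  "Zz n = map (\<lambda>i. (int ((i + 1) div 2), int (i div 2))) [0..<n]"

end

theory Submission
  imports Defs
begin

text \<open>Appending a square to a chain changes \<open>\<tau>\<close> only at the corners of the last three
  squares, and there \<open>\<tau>\<close> depends only on the last seven squares. Up to translation and
  rotation there are finitely many such windows, and evaluating all of them shows: the increment
  of \<open>ZC\<^sub>1\<close> lies in [32, 38] when the chain goes straight and in [44, 50] (at most 46
  for the fourth square) when it turns; it is 32 if the whole window is straight and maximal if
  the whole window zigzags. Induction on the number of squares, starting from the two
  trominoes, gives both bounds and both equality cases.\<close>

section \<open>Second neighbourhoods in a union of squares\<close>

definition sq_edge :: "square set \<Rightarrow> int \<times> int \<Rightarrow> int \<times> int \<Rightarrow> bool" where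
  "sq_edge X p q \<longleftrightarrow> (\<exists>s\<in>X. p \<in> corners s \<and> q \<in> corners s \<and>
      \<bar>fst p - fst q\<bar> + \<bar>snd p - snd q\<bar> = 1)"

definition sq_vertices :: "square set \<Rightarrow> (int \<times> int) set" where
  "sq_vertices X = (\<Union>s\<in>X. corners s)"

definition second_nbhd :: "square set \<Rightarrow> int \<times> int \<Rightarrow> (int \<times> int) set" where
  "second_nbhd X v = {u. u \<noteq> v \<and> (\<exists>w. sq_edge X v w \<and> sq_edge X w u)}"

definition sq_tau :: "square set \<Rightarrow> int \<times> int \<Rightarrow> nat" where
  "sq_tau X v = card (second_nbhd X v)"

lemma corners_iff:
  "p \<in> corners s \<longleftrightarrow> (fst p = fst s \<or> fst p = fst s + 1) \<and> (snd p = snd s \<or> snd p = snd s + 1)"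
  by (cases p; cases s) (auto simp: corners_def)

lemma finite_corners: "finite (corners s)"
  by (simp add: corners_def)

lemma sq_edge_dist: "sq_edge X p q \<Longrightarrow> \<bar>fst p - fst q\<bar> + \<bar>snd p - snd q\<bar> = 1"
  by (auto simp: sq_edge_def)

lemma sq_edge_vertices: "sq_edge X p q \<Longrightarrow> p \<in> sq_vertices X \<and> q \<in> sq_vertices X"
  by (auto simp: sq_edge_def sq_vertices_def)

lemma chain_adj_eq_sq_edge: "chain_adj S = sq_edge (set S)"
  by (auto simp: fun_eq_iff chain_adj_def sq_edge_def)

text \<open>The lattice is bipartite, so the end of a walk of length 2 is never adjacent to its start:
  the vertices at distance 2 are exactly the ends of such walks other than the start.\<close>

lemma tau_eq_sq_tau: "tau S v = sq_tau (set S) v"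
proof -
  have "{u \<in> chain_vertices S. u \<noteq> v \<and> \<not> chain_adj S v u \<and>
          (\<exists>w \<in> chain_vertices S. chain_adj S v w \<and> chain_adj S w u)} = second_nbhd (set S) v"
  proof (intro set_eqI iffI)
    fix u assume "u \<in> second_nbhd (set S) v"
    then obtain w where u: "u \<noteq> v" "sq_edge (set S) v w" "sq_edge (set S) w u"
      by (auto simp: second_nbhd_def)
    have parity: "\<bar>a\<bar> + \<bar>b\<bar> = 1 \<Longrightarrow> \<bar>c\<bar> + \<bar>d\<bar> = 1 \<Longrightarrow> \<bar>a + c\<bar> + \<bar>b + d\<bar> \<noteq> 1"
      for a b c d :: int
      by arith
    have "\<not> sq_edge (set S) v u"
    proof
      assume "sq_edge (set S) v u"
      from sq_edge_dist[OF this] sq_edge_dist[OF u(2)] sq_edge_dist[OF u(3)] show False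
        using parity[of "fst v - fst w" "snd v - snd w" "fst w - fst u" "snd w - snd u"] by simp
    qed
    with u sq_edge_vertices[OF u(2)] sq_edge_vertices[OF u(3)]
    show "u \<in> {u \<in> chain_vertices S. u \<noteq> v \<and> \<not> chain_adj S v u \<and>
          (\<exists>w \<in> chain_vertices S. chain_adj S v w \<and> chain_adj S w u)}"
      by (auto simp: chain_adj_eq_sq_edge chain_vertices_def sq_vertices_def)
  qed (auto simp: second_nbhd_def chain_adj_eq_sq_edge)
  then show ?thesis
    by (simp add: tau_def sq_tau_def)
qed

lemma ZC1_eq_sum_sq_tau: "ZC1 S = (\<Sum>v\<in>sq_vertices (set S). (sq_tau (set S) v)\<^sup>2)"
  by (simp add: ZC1_def tau_eq_sq_tau chain_vertices_def sq_vertices_def)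

lemma sq_tau_outside: "v \<notin> sq_vertices X \<Longrightarrow> sq_tau X v = 0"
proof -
  assume "v \<notin> sq_vertices X"
  then have "second_nbhd X v = {}"
    unfolding second_nbhd_def using sq_edge_vertices by blast
  then show ?thesis
    by (simp add: sq_tau_def)
qed

lemma second_nbhd_local:
  assumes "Y \<subseteq> X"
    and "\<And>s t w. s \<in> X \<Longrightarrow> t \<in> X \<Longrightarrow> v \<in> corners s \<Longrightarrow> w \<in> corners s \<Longrightarrow> w \<in> corners t
           \<Longrightarrow> s \<in> Y \<and> t \<in> Y"
  shows "second_nbhd X v = second_nbhd Y v"
proof
  show "second_nbhd Y v \<subseteq> second_nbhd X v"
    using assms(1) by (auto simp: second_nbhd_def sq_edge_def)
  show "second_nbhd X v \<subseteq> second_nbhd Y v"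
  proof
    fix u assume "u \<in> second_nbhd X v"
    then obtain w s t where "u \<noteq> v" "s \<in> X" "v \<in> corners s" "w \<in> corners s"
        "\<bar>fst v - fst w\<bar> + \<bar>snd v - snd w\<bar> = 1" "t \<in> X" "w \<in> corners t" "u \<in> corners t"
        "\<bar>fst w - fst u\<bar> + \<bar>snd w - snd u\<bar> = 1"
      by (auto simp: second_nbhd_def sq_edge_def)
    moreover from this assms(2) have "s \<in> Y" "t \<in> Y"
      by blast+
    ultimately show "u \<in> second_nbhd Y v"
      unfolding second_nbhd_def sq_edge_def by blast
  qed
qed

section \<open>Locality along a chain\<close>

lemma chain_take: "is_polyomino_chain S \<Longrightarrow> is_polyomino_chain (take k S)"
  unfolding is_polyomino_chain_def by auto

lemma chain_drop:
  assumes "is_polyomino_chain S"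
  shows "is_polyomino_chain (drop k S)"
proof -
  note chain = assms[unfolded is_polyomino_chain_def]
  show ?thesis
    unfolding is_polyomino_chain_def
  proof (intro conjI allI impI)
    fix i assume "Suc i < length (drop k S)"
    then show "\<bar>fst (drop k S ! i) - fst (drop k S ! Suc i)\<bar>
        + \<bar>snd (drop k S ! i) - snd (drop k S ! Suc i)\<bar> = 1"
      using chain[THEN conjunct1, rule_format, of "k + i"] by simp
  next
    fix i j assume "i + 2 = j \<and> j < length (drop k S)"
    moreover from this have "k + j < length S"
      by (simp add: less_diff_conv add.commute)
    ultimately show "drop k S ! i \<noteq> drop k S ! j"
      using chain[THEN conjunct2, THEN conjunct1, rule_format, of "k + i" "k + j"] by simp
  next
    fix i j assume "i + 3 \<le> j \<and> j < length (drop k S)"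
    moreover from this have "k + j < length S"
      by (simp add: less_diff_conv add.commute)
    ultimately show "2 \<le> max \<bar>fst (drop k S ! i) - fst (drop k S ! j)\<bar> \<bar>snd (drop k S ! i) - snd (drop k S ! j)\<bar>"
      using chain[THEN conjunct2, THEN conjunct2, rule_format, of "k + i" "k + j"] by simp
  qed
qed

lemma corners_close:
  "p \<in> corners s \<Longrightarrow> p \<in> corners t \<Longrightarrow> \<bar>fst s - fst t\<bar> \<le> 1 \<and> \<bar>snd s - snd t\<bar> \<le> 1"
  unfolding corners_iff by (cases p, cases s, cases t) (auto simp: abs_le_iff)

lemma chain_common_corner:
  assumes "is_polyomino_chain S" "i < length S" "j < length S"
    and "p \<in> corners (S ! i)" "p \<in> corners (S ! j)"
  shows "j \<le> i + 2"
proof (rule ccontr)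
  assume "\<not> j \<le> i + 2"
  with assms(1,3) have "2 \<le> max \<bar>fst (S ! i) - fst (S ! j)\<bar> \<bar>snd (S ! i) - snd (S ! j)\<bar>"
    unfolding is_polyomino_chain_def by simp
  with corners_close[OF assms(4,5)] show False
    by (simp add: max_def split: if_split_asm)
qed

lemma nth_in_set_take: "i < a \<Longrightarrow> i < length S \<Longrightarrow> S ! i \<in> set (take a S)"
  using nth_mem[of i "take a S"] by simp

lemma nth_in_set_drop: "a \<le> i \<Longrightarrow> i < length S \<Longrightarrow> S ! i \<in> set (drop a S)"
  using nth_mem[of "i - a" "drop a S"] by simp

lemma second_nbhd_take:
  assumes chain: "is_polyomino_chain S"
    and early: "\<And>i. i < length S \<Longrightarrow> v \<in> corners (S ! i) \<Longrightarrow> i + 2 < a"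
  shows "second_nbhd (set S) v = second_nbhd (set (take a S)) v"
proof (rule second_nbhd_local[OF set_take_subset])
  fix s t w assume "s \<in> set S" "t \<in> set S" "v \<in> corners s" "w \<in> corners s" "w \<in> corners t"
  then obtain i k where "i < length S" "s = S ! i" "k < length S" "t = S ! k"
      "v \<in> corners (S ! i)" "w \<in> corners (S ! i)" "w \<in> corners (S ! k)"
    by (auto simp: in_set_conv_nth)
  moreover from this have "k \<le> i + 2" "i + 2 < a"
    using chain_common_corner[OF chain, of i k w] early[of i] by simp_all
  ultimately show "s \<in> set (take a S) \<and> t \<in> set (take a S)"
    by (simp add: nth_in_set_take)
qed

lemma second_nbhd_drop:
  assumes chain: "is_polyomino_chain S"
    and late: "\<And>i. i < length S \<Longrightarrow> v \<in> corners (S ! i) \<Longrightarrow> a + 2 \<le> i"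
  shows "second_nbhd (set S) v = second_nbhd (set (drop a S)) v"
proof (rule second_nbhd_local[OF set_drop_subset])
  fix s t w assume "s \<in> set S" "t \<in> set S" "v \<in> corners s" "w \<in> corners s" "w \<in> corners t"
  then obtain i k where "i < length S" "s = S ! i" "k < length S" "t = S ! k"
      "v \<in> corners (S ! i)" "w \<in> corners (S ! i)" "w \<in> corners (S ! k)"
    by (auto simp: in_set_conv_nth)
  moreover from this have "i \<le> k + 2" "a + 2 \<le> i"
    using chain_common_corner[OF chain, of k i w] late[of i] by simp_all
  ultimately show "s \<in> set (drop a S) \<and> t \<in> set (drop a S)"
    by (simp add: nth_in_set_drop)
qed

definition tail_corners :: "square list \<Rightarrow> (int \<times> int) set" where
  "tail_corners L = (\<Union>s\<in>set (drop (length L - 3) L). corners s)"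

definition ZC1_increment :: "square list \<Rightarrow> int" where
  "ZC1_increment L =
     (\<Sum>v\<in>tail_corners L. int (sq_tau (set L) v) ^ 2 - int (sq_tau (set (butlast L)) v) ^ 2)"

lemma tail_cornersE:
  assumes "v \<in> tail_corners L"
  obtains j where "length L - 3 \<le> j" "j < length L" "v \<in> corners (L ! j)"
proof -
  from assms obtain i where
    "i < length (drop (length L - 3) L)" "v \<in> corners (drop (length L - 3) L ! i)"
    by (auto simp: tail_corners_def in_set_conv_nth)
  then show thesis
    using that[of "length L - 3 + i"] by simp
qed

lemma sq_tau_snoc_outside_tail:
  assumes chain: "is_polyomino_chain (S @ [q])" and v: "v \<notin> tail_corners (S @ [q])"
  shows "sq_tau (set (S @ [q])) v = sq_tau (set S) v"
proof -
  have "i + 2 < length S" if "i < length (S @ [q])" "v \<in> corners ((S @ [q]) ! i)" for i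
  proof (rule ccontr)
    assume "\<not> i + 2 < length S"
    with that(1) have "(S @ [q]) ! i \<in> set (drop (length (S @ [q]) - 3) (S @ [q]))"
      by (intro nth_in_set_drop) auto
    with that(2) v show False
      by (auto simp: tail_corners_def)
  qed
  then show ?thesis
    using second_nbhd_take[OF chain, of v "length S"] by (simp add: sq_tau_def)
qed

lemma ZC1_snoc:
  assumes chain: "is_polyomino_chain (S @ [q])"
  shows "int (ZC1 (S @ [q])) = int (ZC1 S) + ZC1_increment (S @ [q])"
proof -
  define D where "D = tail_corners (S @ [q])"
  define f where "f v = (sq_tau (set (S @ [q])) v)\<^sup>2" for v
  define g where "g v = (sq_tau (set S) v)\<^sup>2" for v
  have fin: "finite (sq_vertices (set L))" for L :: "square list"
    by (simp add: sq_vertices_def finite_corners)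
  have finD: "finite D"
    by (simp add: D_def tail_corners_def finite_corners)
  have "q \<in> set (drop (length S - 2) (S @ [q]))"
    using nth_in_set_drop[of "length S - 2" "length S" "S @ [q]"] by simp
  then have "corners q \<subseteq> D"
    by (auto simp: D_def tail_corners_def)
  then have vertices: "sq_vertices (set (S @ [q])) - D = sq_vertices (set S) - D"
    by (auto simp: sq_vertices_def)
  have "D \<subseteq> sq_vertices (set (S @ [q]))"
    by (auto simp: D_def tail_corners_def sq_vertices_def dest: in_set_dropD)
  then have "ZC1 (S @ [q]) = sum f (sq_vertices (set (S @ [q])) - D) + sum f D"
    unfolding ZC1_eq_sum_sq_tau f_def using sum.subset_diff fin by blast
  moreover have "ZC1 S = sum g (sq_vertices (set S) - D) + sum g D"
  proof -
    have "ZC1 S = sum g (sq_vertices (set S) \<union> D)"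
      unfolding ZC1_eq_sum_sq_tau g_def
      by (rule sum.mono_neutral_left) (auto simp: fin finD sq_tau_outside)
    then show ?thesis
      using sum.subset_diff[of D "sq_vertices (set S) \<union> D" g] fin finD by (simp add: Un_Diff)
  qed
  moreover have "sum f (sq_vertices (set (S @ [q])) - D) = sum g (sq_vertices (set S) - D)"
  proof -
    have "f v = g v" if "v \<notin> D" for v
      using sq_tau_snoc_outside_tail[OF chain, of v] that by (simp add: f_def g_def D_def)
    then show ?thesis
      unfolding vertices by (intro sum.cong) auto
  qed
  moreover have "ZC1_increment (S @ [q]) = (\<Sum>v\<in>D. int (f v) - int (g v))"
    by (simp add: ZC1_increment_def D_def f_def g_def)
  ultimately show ?thesis
    by (simp add: sum_subtractf of_nat_sum)
qed

text \<open>Only \<open>\<tau>\<close> at corners of the last three squares enters the increment. A walk of two sides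
  from such a corner runs along a square containing it, at most two steps further back, and then
  along a square sharing a corner with that one, again at most two steps back: seven squares in all.\<close>

lemma ZC1_increment_window:
  assumes chain: "is_polyomino_chain L"
  shows "ZC1_increment L = ZC1_increment (drop (length L - 7) L)"
proof (cases "length L \<le> 7")
  case False
  define a where "a = length L - 7"
  have tail: "tail_corners (drop a L) = tail_corners L"
    using False by (simp add: tail_corners_def a_def add.commute)
  have late: "a + 2 \<le> i"
    if tail: "v \<in> tail_corners L" and "i < length L" "v \<in> corners (L ! i)" for v i
  proof -
    obtain j where j: "length L - 3 \<le> j" "j < length L" "v \<in> corners (L ! j)"
      using tail by (rule tail_cornersE)
    with chain_common_corner[OF chain, of i j v] that have "j \<le> i + 2"
      by simp
    with j(1) False show ?thesis
      by (simp add: a_def)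
  qed
  have "sq_tau (set L) v = sq_tau (set (drop a L)) v"
    and "sq_tau (set (butlast L)) v = sq_tau (set (butlast (drop a L))) v"
    if "v \<in> tail_corners L" for v
  proof -
    show "sq_tau (set L) v = sq_tau (set (drop a L)) v"
      using second_nbhd_drop[OF chain late[OF that]] by (simp add: sq_tau_def)
    have "is_polyomino_chain (butlast L)"
      using chain_take[OF chain] by (simp add: butlast_conv_take)
    moreover have "a + 2 \<le> i" if "i < length (butlast L)" "v \<in> corners (butlast L ! i)" for i
      using late[of v i] \<open>v \<in> tail_corners L\<close> that by (simp add: nth_butlast)
    ultimately show "sq_tau (set (butlast L)) v = sq_tau (set (butlast (drop a L))) v"
      using second_nbhd_drop[of "butlast L" v a] by (simp add: sq_tau_def butlast_drop)
  qed
  then show ?thesis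
    unfolding ZC1_increment_def tail a_def[symmetric] by (intro sum.cong) auto
qed simp

section \<open>Local description and evaluation\<close>

text \<open>\<open>hside X x y\<close>: the segment from \<open>(x, y)\<close> to \<open>(x + 1, y)\<close> is a side of a square of
  \<open>X\<close> (the one above or the one below it); \<open>vside\<close> likewise for the segment from \<open>(x, y)\<close> to
  \<open>(x, y + 1)\<close>.\<close>

definition hside :: "square set \<Rightarrow> int \<Rightarrow> int \<Rightarrow> bool" where
  "hside X x y \<longleftrightarrow> (x, y) \<in> X \<or> (x, y - 1) \<in> X"

definition vside :: "square set \<Rightarrow> int \<Rightarrow> int \<Rightarrow> bool" where
  "vside X x y \<longleftrightarrow> (x, y) \<in> X \<or> (x - 1, y) \<in> X"

lemma sq_edge_from:
  "sq_edge X (x, y) w \<longleftrightarrow>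
     (w = (x + 1, y) \<and> hside X x y) \<or> (w = (x - 1, y) \<and> hside X (x - 1) y) \<or>
     (w = (x, y + 1) \<and> vside X x y) \<or> (w = (x, y - 1) \<and> vside X x (y - 1))"
proof
  assume "sq_edge X (x, y) w"
  then obtain a b where "(a, b) \<in> X" "(x, y) \<in> corners (a, b)" "w \<in> corners (a, b)"
    "\<bar>x - fst w\<bar> + \<bar>y - snd w\<bar> = 1"
    by (auto simp: sq_edge_def)
  then show "(w = (x + 1, y) \<and> hside X x y) \<or> (w = (x - 1, y) \<and> hside X (x - 1) y) \<or>
     (w = (x, y + 1) \<and> vside X x y) \<or> (w = (x, y - 1) \<and> vside X x (y - 1))"
    by (cases w) (auto simp: corners_iff hside_def vside_def)
next
  assume "(w = (x + 1, y) \<and> hside X x y) \<or> (w = (x - 1, y) \<and> hside X (x - 1) y) \<or>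
     (w = (x, y + 1) \<and> vside X x y) \<or> (w = (x, y - 1) \<and> vside X x (y - 1))"
  then show "sq_edge X (x, y) w"
    unfolding sq_edge_def hside_def vside_def
    by (elim disjE conjE; (elim disjE)?; force simp: corners_iff)
qed

text \<open>The eight points at lattice distance 2 from \<open>v\<close>, each paired with the condition that
  some path of two sides of \<open>X\<close> leads to it from \<open>v\<close>.\<close>

definition dist2_candidates :: "square set \<Rightarrow> int \<times> int \<Rightarrow> ((int \<times> int) \<times> bool) list" where
  "dist2_candidates X v = (case v of (x, y) \<Rightarrow>
     [((x + 2, y), hside X x y \<and> hside X (x + 1) y),
      ((x - 2, y), hside X (x - 1) y \<and> hside X (x - 2) y),
      ((x, y + 2), vside X x y \<and> vside X x (y + 1)),
      ((x, y - 2), vside X x (y - 1) \<and> vside X x (y - 2)),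
      ((x + 1, y + 1), hside X x y \<and> vside X (x + 1) y \<or> vside X x y \<and> hside X x (y + 1)),
      ((x + 1, y - 1), hside X x y \<and> vside X (x + 1) (y - 1) \<or> vside X x (y - 1) \<and> hside X x (y - 1)),
      ((x - 1, y + 1), hside X (x - 1) y \<and> vside X (x - 1) y \<or> vside X x y \<and> hside X (x - 1) (y + 1)),
      ((x - 1, y - 1), hside X (x - 1) y \<and> vside X (x - 1) (y - 1) \<or>
                        vside X x (y - 1) \<and> hside X (x - 1) (y - 1))])"

lemma second_nbhd_near:
  assumes "(x + dx, y + dy) \<in> second_nbhd X (x, y)"
  shows "dx \<in> {-2, -1, 0, 1, 2} \<and> dy \<in> {-2, -1, 0, 1, 2}"
proof -
  from assms obtain w where "sq_edge X (x, y) w" "sq_edge X w (x + dx, y + dy)"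
    by (auto simp: second_nbhd_def)
  from sq_edge_dist[OF this(1)] sq_edge_dist[OF this(2)]
  have "-2 \<le> dx \<and> dx \<le> 2 \<and> -2 \<le> dy \<and> dy \<le> 2"
    by simp arith
  then show ?thesis
    by auto
qed

lemma mem_map_fst_filter_snd: "u \<in> set (map fst (filter snd xs)) \<longleftrightarrow> (\<exists>p\<in>set xs. fst p = u \<and> snd p)"
  by auto

lemma dist2_candidates_near:
  assumes "(x + dx, y + dy) \<in> set (map fst (filter snd (dist2_candidates X (x, y))))"
  shows "dx \<in> {-2, -1, 0, 1, 2} \<and> dy \<in> {-2, -1, 0, 1, 2}"
  using assms unfolding dist2_candidates_def mem_map_fst_filter_snd
  by (simp only: list.set insert_iff empty_iff bex_simps fst_conv snd_conv case_prod_conv;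
      elim disjE; simp)

lemma second_nbhd_eq_candidates:
  "second_nbhd X (x, y) = set (map fst (filter snd (dist2_candidates X (x, y))))"
proof (intro set_eqI)
  fix u :: "int \<times> int"
  obtain dx dy where u: "u = (x + dx, y + dy)"
  proof
    show "u = (x + (fst u - x), y + (snd u - y))"
      by simp
  qed
  show "u \<in> second_nbhd X (x, y) \<longleftrightarrow> u \<in> set (map fst (filter snd (dist2_candidates X (x, y))))"
  proof (cases "dx \<in> {-2, -1, 0, 1, 2} \<and> dy \<in> {-2, -1, 0, 1, 2}")
    case True
    then show ?thesis
      unfolding u second_nbhd_def dist2_candidates_def
      apply (simp only: insert_iff empty_iff simp_thms mem_map_fst_filter_snd list.set bex_simps
          fst_conv snd_conv case_prod_conv)
      apply (elim conjE disjE)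
      apply (simp_all add: sq_edge_from ex_disj_distrib conj_disj_distribR)
      done
  next
    case False
    then show ?thesis
      unfolding u using second_nbhd_near dist2_candidates_near by blast
  qed
qed

lemma sq_tau_code [code]: "sq_tau X v = length (filter snd (dist2_candidates X v))"
proof -
  obtain x y where v: "v = (x, y)"
    by (cases v)
  have "distinct (map fst (dist2_candidates X v))"
    by (simp add: dist2_candidates_def v)
  then have "distinct (map fst (filter snd (dist2_candidates X v)))"
    by (simp add: distinct_map_filter)
  then show ?thesis
    unfolding sq_tau_def v second_nbhd_eq_candidates
    by (metis distinct_card length_map v)
qed

lemmas tau_code [code] = tau_eq_sq_tau

section \<open>Lattice symmetries\<close>

definition lattice_iso :: "(int \<times> int \<Rightarrow> int \<times> int) \<Rightarrow> (square \<Rightarrow> square) \<Rightarrow> bool" where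
  "lattice_iso g h \<longleftrightarrow> inj g \<and>
     (\<forall>p q. \<bar>fst (g p) - fst (g q)\<bar> + \<bar>snd (g p) - snd (g q)\<bar> = \<bar>fst p - fst q\<bar> + \<bar>snd p - snd q\<bar>) \<and>
     (\<forall>s. corners (h s) = g ` corners s)"

lemma lattice_isoD:
  assumes "lattice_iso g h"
  shows "inj g"
    and "\<bar>fst (g p) - fst (g q)\<bar> + \<bar>snd (g p) - snd (g q)\<bar> = \<bar>fst p - fst q\<bar> + \<bar>snd p - snd q\<bar>"
    and "corners (h s) = g ` corners s"
  using assms unfolding lattice_iso_def by blast+

lemma sq_edge_iso:
  assumes iso: "lattice_iso g h"
  shows "sq_edge (h ` X) (g p) (g q) \<longleftrightarrow> sq_edge X p q"
proof -
  have "g p \<in> g ` A \<longleftrightarrow> p \<in> A" for p A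
    using lattice_isoD(1)[OF iso] by (auto dest: injD)
  then show ?thesis
    unfolding sq_edge_def using lattice_isoD(2,3)[OF iso] by auto
qed

lemma second_nbhd_iso:
  assumes iso: "lattice_iso g h"
  shows "second_nbhd (h ` X) (g v) = g ` second_nbhd X v"
proof
  note edge = sq_edge_iso[OF iso]
  show "second_nbhd (h ` X) (g v) \<subseteq> g ` second_nbhd X v"
  proof
    fix u assume "u \<in> second_nbhd (h ` X) (g v)"
    then obtain w where u: "u \<noteq> g v" "sq_edge (h ` X) (g v) w" "sq_edge (h ` X) w u"
      by (auto simp: second_nbhd_def)
    moreover have "w \<in> range g" "u \<in> range g"
      using u(3) lattice_isoD(3)[OF iso] by (auto simp: sq_edge_def)
    then obtain w' u' where "w = g w'" "u = g u'"
      by blast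
    ultimately have "u' \<noteq> v" "sq_edge X v w'" "sq_edge X w' u'" "u = g u'"
      using edge by auto
    then show "u \<in> g ` second_nbhd X v"
      unfolding second_nbhd_def by blast
  qed
  show "g ` second_nbhd X v \<subseteq> second_nbhd (h ` X) (g v)"
  proof
    fix u assume "u \<in> g ` second_nbhd X v"
    then obtain u' w where "u = g u'" "u' \<noteq> v" "sq_edge X v w" "sq_edge X w u'"
      by (auto simp: second_nbhd_def)
    then have "u \<noteq> g v" "sq_edge (h ` X) (g v) (g w)" "sq_edge (h ` X) (g w) u"
      using edge lattice_isoD(1)[OF iso] by (auto dest: injD)
    then show "u \<in> second_nbhd (h ` X) (g v)"
      unfolding second_nbhd_def by blast
  qed
qed

lemma sq_tau_iso:
  assumes iso: "lattice_iso g h"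
  shows "sq_tau (h ` X) (g v) = sq_tau X v"
  unfolding sq_tau_def second_nbhd_iso[OF iso]
  using lattice_isoD(1)[OF iso] by (simp add: card_image inj_on_subset)

lemma ZC1_increment_iso:
  assumes iso: "lattice_iso g h"
  shows "ZC1_increment (map h L) = ZC1_increment L"
proof -
  have "tail_corners (map h L) = g ` tail_corners L"
    by (simp add: tail_corners_def drop_map image_UN lattice_isoD(3)[OF iso])
  then show ?thesis
    unfolding ZC1_increment_def using lattice_isoD(1)[OF iso]
    by (simp add: sum.reindex inj_on_subset map_butlast[symmetric] sq_tau_iso[OF iso])
qed

lemma ZC1_iso:
  assumes iso: "lattice_iso g h"
  shows "ZC1 (map h L) = ZC1 L"
proof -
  have "sq_vertices (set (map h L)) = g ` sq_vertices (set L)"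
    by (simp add: sq_vertices_def image_UN lattice_isoD(3)[OF iso])
  then show ?thesis
    unfolding ZC1_eq_sum_sq_tau using lattice_isoD(1)[OF iso]
    by (simp add: sum.reindex inj_on_subset sq_tau_iso[OF iso])
qed

definition shift :: "int \<times> int \<Rightarrow> int \<times> int \<Rightarrow> int \<times> int" where
  "shift c p = (fst p + fst c, snd p + snd c)"

definition rot90 :: "int \<times> int \<Rightarrow> int \<times> int" where
  "rot90 p = (- snd p, fst p)"

text \<open>A square is named by its lower-left corner, which a quarter turn moves to the lower-right.\<close>

definition rot90_sq :: "square \<Rightarrow> square" where
  "rot90_sq s = (- snd s - 1, fst s)"

lemma lattice_iso_shift: "lattice_iso (shift c) (shift c)"
  by (auto simp: lattice_iso_def inj_def shift_def corners_def prod_eq_iff algebra_simps)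

lemma lattice_iso_rot90: "lattice_iso rot90 rot90_sq"
  by (auto simp: lattice_iso_def inj_def rot90_def rot90_sq_def corners_def prod_eq_iff
      abs_minus_commute)

lemma chain_shift_iff: "is_polyomino_chain (map (shift c) L) \<longleftrightarrow> is_polyomino_chain L"
  by (simp add: is_polyomino_chain_def shift_def prod_eq_iff)

lemma chain_rot90_iff: "is_polyomino_chain (map rot90_sq L) \<longleftrightarrow> is_polyomino_chain L"
proof -
  have "\<bar>- b - 1 - (- b' - 1)\<bar> = \<bar>b - b'\<bar>" for b b' :: int
    by arith
  then show ?thesis
    unfolding is_polyomino_chain_def
    by (simp add: rot90_sq_def prod_eq_iff max.commute add.commute conj_commute;
        simp add: abs_minus_commute)
qed

lemma link_shift: "2 \<le> k \<Longrightarrow> k < length L \<Longrightarrow> link (map (shift c) L) k = link L k"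
  by (simp add: link_def shift_def)

lemma link_rot90: "2 \<le> k \<Longrightarrow> k < length L \<Longrightarrow> link (map rot90_sq L) k = link L k"
  by (auto simp: link_def rot90_sq_def)

section \<open>Enumeration of short chains\<close>

definition unit_steps :: "(int \<times> int) list" where
  "unit_steps = [(1, 0), (-1, 0), (0, 1), (0, -1)]"

definition admissible_next :: "square list \<Rightarrow> square \<Rightarrow> bool" where
  "admissible_next L q \<longleftrightarrow> q \<noteq> L ! (length L - 2) \<and>
     list_all (\<lambda>s. 2 \<le> max \<bar>fst s - fst q\<bar> \<bar>snd s - snd q\<bar>) (take (length L - 2) L)"

definition chain_extensions :: "square list \<Rightarrow> square list list" where
  "chain_extensions L = [L @ [q]. q \<leftarrow> map (shift (last L)) unit_steps, admissible_next L q]"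

fun normal_chains :: "nat \<Rightarrow> square list list" where
  "normal_chains 0 = []"
| "normal_chains (Suc 0) = []"
| "normal_chains (Suc (Suc 0)) = [[(0, 0), (1, 0)]]"
| "normal_chains (Suc (Suc (Suc k))) = concat (map chain_extensions (normal_chains (Suc (Suc k))))"

lemma unit_step_in_unit_steps: "\<bar>a\<bar> + \<bar>b\<bar> = (1::int) \<Longrightarrow> (a, b) \<in> set unit_steps"
proof -
  assume "\<bar>a\<bar> + \<bar>b\<bar> = 1"
  then have "(a = 1 \<and> b = 0) \<or> (a = -1 \<and> b = 0) \<or> (a = 0 \<and> b = 1) \<or> (a = 0 \<and> b = -1)"
    by arith
  then show ?thesis
    by (auto simp: unit_steps_def)
qed

lemma snoc_in_chain_extensions:
  assumes chain: "is_polyomino_chain (L @ [q])" and len: "2 \<le> length L"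
  shows "L @ [q] \<in> set (chain_extensions L)"
proof -
  define n where "n = length L"
  note c = chain[unfolded is_polyomino_chain_def]
  have "L \<noteq> []"
    using len by auto
  then have last: "(L @ [q]) ! (n - 1) = last L" and q: "(L @ [q]) ! n = q"
    by (simp_all add: n_def last_conv_nth nth_append)
  have step: "Suc (n - 1) = n" "Suc (n - 1) < length (L @ [q])"
    using len by (simp_all add: n_def)
  have "\<bar>fst ((L @ [q]) ! (n - 1)) - fst ((L @ [q]) ! Suc (n - 1))\<bar>
      + \<bar>snd ((L @ [q]) ! (n - 1)) - snd ((L @ [q]) ! Suc (n - 1))\<bar> = 1"
    using c[THEN conjunct1, rule_format, OF step(2)] .
  then have "\<bar>fst q - fst (last L)\<bar> + \<bar>snd q - snd (last L)\<bar> = 1"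
    unfolding step(1) last q by (simp add: abs_minus_commute)
  then have "(fst q - fst (last L), snd q - snd (last L)) \<in> set unit_steps"
    by (rule unit_step_in_unit_steps)
  then have "q \<in> set (map (shift (last L)) unit_steps)"
    by (force simp: shift_def)
  moreover have "q \<noteq> L ! (n - 2)"
  proof -
    have "n - 2 + 2 = n \<and> n < length (L @ [q])"
      using len by (simp add: n_def)
    from c[THEN conjunct2, THEN conjunct1, rule_format, OF this] show ?thesis
      using len by (auto simp: q n_def nth_append split: if_splits)
  qed
  moreover have "2 \<le> max \<bar>fst s - fst q\<bar> \<bar>snd s - snd q\<bar>" if "s \<in> set (take (n - 2) L)" for s
  proof -
    from that obtain i where "i < n - 2" "s = L ! i"
      by (auto simp: in_set_conv_nth n_def)
    with c[THEN conjunct2, THEN conjunct2, rule_format, of i n] show ?thesis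
      by (simp add: q n_def nth_append)
  qed
  ultimately show ?thesis
    by (auto simp: chain_extensions_def admissible_next_def list_all_iff n_def)
qed

lemma normal_chains_complete:
  "is_polyomino_chain L \<Longrightarrow> length L = Suc (Suc k) \<Longrightarrow> L ! 0 = (0, 0) \<Longrightarrow> L ! 1 = (1, 0)
    \<Longrightarrow> L \<in> set (normal_chains (Suc (Suc k)))"
proof (induction k arbitrary: L)
  case 0
  then have "L = [L ! 0, L ! 1]"
    by (simp add: list_eq_iff_nth_eq less_Suc_eq)
  with 0 show ?case
    by simp
next
  case (Suc k)
  then obtain B q where L: "L = B @ [q]"
    by (metis append_butlast_last_id list.size(3) nat.distinct(1))
  with Suc.prems have "is_polyomino_chain B" "length B = Suc (Suc k)" "B ! 0 = (0, 0)" "B ! 1 = (1, 0)"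
    using chain_take[of L "length B"] by (simp_all add: nth_append)
  with Suc.IH have "B \<in> set (normal_chains (Suc (Suc k)))"
    by blast
  moreover have "L \<in> set (chain_extensions B)"
    using snoc_in_chain_extensions Suc.prems(1) \<open>length B = Suc (Suc k)\<close> L by simp
  ultimately show ?case
    by auto
qed

text \<open>A window has length 4 only when the fourth square is appended; the zigzag then gains 46.\<close>

definition max_increment :: "nat \<Rightarrow> int" where
  "max_increment l = (if l = 4 then 46 else 50)"

text \<open>The \<open>let\<close> makes \<open>code_simp\<close> evaluate the increment once rather than once per
  occurrence.\<close>

definition increment_bounded :: "square list \<Rightarrow> bool" where
  "increment_bounded L \<longleftrightarrow> (let d = ZC1_increment L in
     (link L (length L - 1) = 1 \<longrightarrow> 32 \<le> d \<and> d \<le> 38) \<and>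
     (link L (length L - 1) = 2 \<longrightarrow> 44 \<le> d \<and> d \<le> max_increment (length L)) \<and>
     ((\<forall>k\<in>{2..<length L}. link L k = 1) \<longrightarrow> d = 32) \<and>
     ((\<forall>k\<in>{2..<length L}. link L k = 2) \<longrightarrow> d = max_increment (length L)))"

lemma ZC1_normal_chains_3: "\<forall>L\<in>set (normal_chains 3). ZC1 L = (if link L 2 = 1 then 52 else 62)"
  by code_simp

lemma increment_bounded_normal_chains:
  assumes "4 \<le> l" "l \<le> 7" "L \<in> set (normal_chains l)"
  shows "increment_bounded L"
proof -
  from assms(1,2) have "l = 4 \<or> l = 5 \<or> l = 6 \<or> l = 7"
    by auto
  then have "\<forall>L\<in>set (normal_chains l). increment_bounded L"
    by (elim disjE; hypsubst; code_simp)
  with assms(3) show ?thesis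
    by blast
qed

lemma chain_wlog_normal:
  assumes normal: "\<And>L. is_polyomino_chain L \<Longrightarrow> length L = l \<Longrightarrow> L ! 0 = (0, 0) \<Longrightarrow> L ! 1 = (1, 0)
      \<Longrightarrow> P L"
    and shift_inv: "\<And>L c. length L = l \<Longrightarrow> P (map (shift c) L) \<Longrightarrow> P L"
    and rot_inv: "\<And>L. length L = l \<Longrightarrow> P (map rot90_sq L) \<Longrightarrow> P L"
    and chain: "is_polyomino_chain L" and len: "length L = l" and l: "2 \<le> l"
  shows "P L"
proof -
  define first_step where
    "first_step L = (fst (L ! 1) - fst (L ! 0), snd (L ! 1) - snd (L ! 0))" for L :: "square list"
  have east: "P L" if "is_polyomino_chain L" "length L = l" "first_step L = (1, 0)" for L
  proof -
    have "P (map (shift (- fst (L ! 0), - snd (L ! 0))) L)"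
      by (rule normal) (use that l in \<open>auto simp: chain_shift_iff shift_def first_step_def\<close>)
    with shift_inv that(2) show ?thesis
      by blast
  qed
  have turn: "P L"
    if rotated: "\<And>L. is_polyomino_chain L \<Longrightarrow> length L = l \<Longrightarrow> first_step L = (- snd d, fst d) \<Longrightarrow> P L"
      and "is_polyomino_chain L" "length L = l" "first_step L = d" for L d
  proof -
    have "P (map rot90_sq L)"
      by (rule rotated) (use that(2-4) l in \<open>auto simp: chain_rot90_iff first_step_def rot90_sq_def\<close>)
    with rot_inv that(3) show ?thesis
      by blast
  qed
  have south: "P L" if "is_polyomino_chain L" "length L = l" "first_step L = (0, -1)" for L
    using turn[of "(0, -1)"] east that by simp
  have west: "P L" if "is_polyomino_chain L" "length L = l" "first_step L = (-1, 0)" for L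
    using turn[of "(-1, 0)"] south that by simp
  have north: "P L" if "is_polyomino_chain L" "length L = l" "first_step L = (0, 1)" for L
    using turn[of "(0, 1)"] west that by simp
  have "first_step L \<in> set unit_steps"
    unfolding first_step_def
    using chain[unfolded is_polyomino_chain_def, THEN conjunct1, rule_format, of 0] len l
    by (intro unit_step_in_unit_steps) (simp add: abs_minus_commute)
  with east south west north chain len show ?thesis
    by (auto simp: unit_steps_def)
qed

lemma increment_bounded_iso:
  assumes "lattice_iso g h" "3 \<le> length L"
    and "\<And>k. 2 \<le> k \<Longrightarrow> k < length L \<Longrightarrow> link (map h L) k = link L k"
  shows "increment_bounded (map h L) \<longleftrightarrow> increment_bounded L"
proof -
  have "link (map h L) (length L - 1) = link L (length L - 1)"
    using assms(2,3) by simp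
  moreover have "(\<forall>k\<in>{2..<length L}. link (map h L) k = v) \<longleftrightarrow> (\<forall>k\<in>{2..<length L}. link L k = v)" for v
    using assms(3) by auto
  ultimately show ?thesis
    by (simp add: increment_bounded_def ZC1_increment_iso[OF assms(1)])
qed

lemma increment_bounded_window:
  assumes "is_polyomino_chain L" "4 \<le> length L" "length L \<le> 7"
  shows "increment_bounded L"
proof (rule chain_wlog_normal[where P = increment_bounded, OF _ _ _ assms(1) refl])
  fix L' assume "is_polyomino_chain L'" "length L' = length L" "L' ! 0 = (0, 0)" "L' ! 1 = (1, 0)"
  with assms(2) have "L' \<in> set (normal_chains (length L))"
    using normal_chains_complete[of L' "length L - 2"] by (simp add: Suc_diff_Suc numeral_2_eq_2)
  with increment_bounded_normal_chains assms(2,3) show "increment_bounded L'"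
    by blast
next
  fix L' c assume "length L' = length L" "increment_bounded (map (shift c) L')"
  with assms(2) show "increment_bounded L'"
    using increment_bounded_iso[OF lattice_iso_shift] link_shift by simp
next
  fix L' assume "length L' = length L" "increment_bounded (map rot90_sq L')"
  with assms(2) show "increment_bounded L'"
    using increment_bounded_iso[OF lattice_iso_rot90] link_rot90 by simp
qed (use assms in simp)

lemma ZC1_length_3:
  assumes "is_polyomino_chain L" "length L = 3"
  shows "ZC1 L = (if link L 2 = 1 then 52 else 62)"
proof (rule chain_wlog_normal[OF _ _ _ assms(1) refl])
  fix L' assume "is_polyomino_chain L'" "length L' = length L" "L' ! 0 = (0, 0)" "L' ! 1 = (1, 0)"
  with assms(2) have "L' \<in> set (normal_chains 3)"
    using normal_chains_complete[of L' 1] by (simp add: numeral_3_eq_3)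
  with ZC1_normal_chains_3 show "ZC1 L' = (if link L' 2 = 1 then 52 else 62)"
    by blast
next
  fix L' c assume "length L' = length L"
    and "ZC1 (map (shift c) L') = (if link (map (shift c) L') 2 = 1 then 52 else 62)"
  with assms(2) show "ZC1 L' = (if link L' 2 = 1 then 52 else 62)"
    using link_shift[of 2 L' c] ZC1_iso[OF lattice_iso_shift] by simp
next
  fix L' assume "length L' = length L"
    and "ZC1 (map rot90_sq L') = (if link (map rot90_sq L') 2 = 1 then 52 else 62)"
  with assms(2) show "ZC1 L' = (if link L' 2 = 1 then 52 else 62)"
    using link_rot90[of 2 L'] ZC1_iso[OF lattice_iso_rot90] by simp
qed (use assms in simp)

section \<open>Bounds by induction on the length\<close>

lemma link_cases: "link S k = 1 \<or> link S k = 2"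
  by (simp add: link_def)

lemma link_snoc:
  assumes "k < length S"
  shows "link (S @ [q]) k = link S k"
proof -
  have "k - 1 < length S" "k - 2 < length S"
    using assms by arith+
  with assms have "(S @ [q]) ! k = S ! k" "(S @ [q]) ! (k - 1) = S ! (k - 1)"
      "(S @ [q]) ! (k - 2) = S ! (k - 2)"
    by (simp_all add: nth_append)
  then show ?thesis
    unfolding link_def by (simp only:)
qed

lemma link_drop:
  assumes "2 \<le> j" "j < length (drop a L)"
  shows "link (drop a L) j = link L (a + j)"
proof -
  have idx: "a + (j - 1) = a + j - 1" "a + (j - 2) = a + j - 2"
    using assms(1) by arith+
  have "a \<le> length L"
    using assms(2) by simp
  then have "drop a L ! j = L ! (a + j)" "drop a L ! (j - 1) = L ! (a + j - 1)"
      "drop a L ! (j - 2) = L ! (a + j - 2)"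
    by (simp_all only: nth_drop idx)
  then show ?thesis
    unfolding link_def by (simp only:)
qed

lemma ZC1_snoc_bounds:
  assumes chain: "is_polyomino_chain (S @ [q])" and len: "length S = n" and n: "3 \<le> n"
  obtains d where "int (ZC1 (S @ [q])) = int (ZC1 S) + d"
    and "link (S @ [q]) n = 1 \<Longrightarrow> 32 \<le> d \<and> d \<le> 38"
    and "link (S @ [q]) n = 2 \<Longrightarrow> 44 \<le> d \<and> d \<le> max_increment (Suc n)"
    and "\<forall>k. 2 \<le> k \<and> k < Suc n \<longrightarrow> link (S @ [q]) k = 1 \<Longrightarrow> d = 32"
    and "\<forall>k. 2 \<le> k \<and> k < Suc n \<longrightarrow> link (S @ [q]) k = 2 \<Longrightarrow> d = max_increment (Suc n)"
proof -
  define W where "W = drop (n - 6) (S @ [q])"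
  have len_W: "length W = Suc n - (n - 6)" "4 \<le> length W" "length W \<le> 7"
    using len n by (auto simp: W_def)
  have link_W: "link W j = link (S @ [q]) (n - 6 + j)" if "2 \<le> j" "j < length W" for j
    using link_drop[of j "n - 6" "S @ [q]"] that by (simp add: W_def)
  have "int (ZC1 (S @ [q])) = int (ZC1 S) + ZC1_increment W"
    using ZC1_snoc[OF chain] ZC1_increment_window[OF chain] len n by (simp add: W_def)
  moreover have "increment_bounded W"
    using increment_bounded_window[OF chain_drop[OF chain]] len_W by (simp add: W_def)
  moreover have "link W (length W - 1) = link (S @ [q]) n"
  proof -
    have "2 \<le> length W - 1" "length W - 1 < length W" "n - 6 + (length W - 1) = n"
      using len_W n by arith+
    with link_W show ?thesis
      by simp
  qed
  moreover have "max_increment (length W) = max_increment (Suc n)"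
    using len_W n by (auto simp: max_increment_def)
  moreover have "\<forall>k\<in>{2..<length W}. link W k = v"
    if "\<forall>k. 2 \<le> k \<and> k < Suc n \<longrightarrow> link (S @ [q]) k = v" for v
  proof
    fix k assume "k \<in> {2..<length W}"
    with that link_W[of k] len_W show "link W k = v"
      by auto
  qed
  ultimately show thesis
    by (intro that[of "ZC1_increment W"]) (auto simp: increment_bounded_def Let_def)
qed

definition ZC1_max :: "nat \<Rightarrow> int" where
  "ZC1_max n = (if n = 3 then 62 else 50 * int n - 92)"

lemma ZC1_bounds:
  assumes "3 \<le> n" "is_polyomino_chain S" "length S = n"
  shows "32 * int n - 44 \<le> int (ZC1 S) \<and> int (ZC1 S) \<le> ZC1_max n
    \<and> (int (ZC1 S) = 32 * int n - 44 \<longleftrightarrow> (\<forall>k. 2 \<le> k \<and> k < n \<longrightarrow> link S k = 1))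
    \<and> (int (ZC1 S) = ZC1_max n \<longleftrightarrow> (\<forall>k. 2 \<le> k \<and> k < n \<longrightarrow> link S k = 2))"
  using assms
proof (induction n arbitrary: S rule: nat_induct_at_least)
  case base
  have "(\<forall>k. 2 \<le> k \<and> k < 3 \<longrightarrow> link S k = v) \<longleftrightarrow> link S 2 = v" for v
    by (auto simp: numeral_3_eq_3 numeral_2_eq_2 le_less_Suc_eq)
  with base ZC1_length_3[of S] link_cases[of S 2] show ?case
    by (auto simp: ZC1_max_def)
next
  case (Suc n S')
  then obtain S q where S': "S' = S @ [q]"
    by (metis append_butlast_last_id list.size(3) nat.distinct(1))
  with Suc.prems have chain: "is_polyomino_chain (S @ [q])" and len: "length S = n"
    by simp_all
  with Suc.IH have IH:
    "32 * int n - 44 \<le> int (ZC1 S)" "int (ZC1 S) \<le> ZC1_max n"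
    "int (ZC1 S) = 32 * int n - 44 \<longleftrightarrow> (\<forall>k. 2 \<le> k \<and> k < n \<longrightarrow> link S k = 1)"
    "int (ZC1 S) = ZC1_max n \<longleftrightarrow> (\<forall>k. 2 \<le> k \<and> k < n \<longrightarrow> link S k = 2)"
    using chain_take[OF chain, of n] by simp_all
  obtain d where d: "int (ZC1 (S @ [q])) = int (ZC1 S) + d"
    and straight: "link (S @ [q]) n = 1 \<Longrightarrow> 32 \<le> d \<and> d \<le> 38"
    and turn: "link (S @ [q]) n = 2 \<Longrightarrow> 44 \<le> d \<and> d \<le> max_increment (Suc n)"
    and all_straight: "\<forall>k. 2 \<le> k \<and> k < Suc n \<longrightarrow> link (S @ [q]) k = 1 \<Longrightarrow> d = 32"
    and all_turn: "\<forall>k. 2 \<le> k \<and> k < Suc n \<longrightarrow> link (S @ [q]) k = 2 \<Longrightarrow> d = max_increment (Suc n)"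
    using ZC1_snoc_bounds[OF chain len Suc.hyps] by blast
  have links: "(\<forall>k. 2 \<le> k \<and> k < Suc n \<longrightarrow> link (S @ [q]) k = v) \<longleftrightarrow>
      (\<forall>k. 2 \<le> k \<and> k < n \<longrightarrow> link S k = v) \<and> link (S @ [q]) n = v" for v
    using link_snoc[of _ S q] len Suc.hyps by (auto simp: less_Suc_eq)
  have max_step: "ZC1_max (Suc n) = ZC1_max n + max_increment (Suc n)"
    using Suc.hyps by (simp add: ZC1_max_def max_increment_def)
  have d_range: "32 \<le> d" "d \<le> max_increment (Suc n)"
    using link_cases[of "S @ [q]" n] straight turn by (auto simp: max_increment_def)
  show ?case
    unfolding S'
  proof (intro conjI)
    show "32 * int (Suc n) - 44 \<le> int (ZC1 (S @ [q]))" "int (ZC1 (S @ [q])) \<le> ZC1_max (Suc n)"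
      using IH(1,2) d d_range max_step by simp_all
    show "int (ZC1 (S @ [q])) = 32 * int (Suc n) - 44
        \<longleftrightarrow> (\<forall>k. 2 \<le> k \<and> k < Suc n \<longrightarrow> link (S @ [q]) k = 1)"
    proof
      assume "int (ZC1 (S @ [q])) = 32 * int (Suc n) - 44"
      then have "int (ZC1 S) = 32 * int n - 44" "d = 32"
        using IH(1) d d_range by simp_all
      moreover from \<open>d = 32\<close> turn have "link (S @ [q]) n \<noteq> 2"
        by auto
      ultimately show "\<forall>k. 2 \<le> k \<and> k < Suc n \<longrightarrow> link (S @ [q]) k = 1"
        using IH(3) links[of 1] link_cases[of "S @ [q]" n] by blast
    next
      assume all: "\<forall>k. 2 \<le> k \<and> k < Suc n \<longrightarrow> link (S @ [q]) k = 1"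
      then have "int (ZC1 S) = 32 * int n - 44"
        using IH(3) links[of 1] by blast
      with all_straight[OF all] d show "int (ZC1 (S @ [q])) = 32 * int (Suc n) - 44"
        by simp
    qed
    show "int (ZC1 (S @ [q])) = ZC1_max (Suc n)
        \<longleftrightarrow> (\<forall>k. 2 \<le> k \<and> k < Suc n \<longrightarrow> link (S @ [q]) k = 2)"
    proof
      assume "int (ZC1 (S @ [q])) = ZC1_max (Suc n)"
      then have "int (ZC1 S) = ZC1_max n" "d = max_increment (Suc n)"
        using IH(2) d d_range max_step by simp_all
      moreover from \<open>d = max_increment (Suc n)\<close> straight have "link (S @ [q]) n \<noteq> 1"
        by (auto simp: max_increment_def split: if_split_asm)
      ultimately show "\<forall>k. 2 \<le> k \<and> k < Suc n \<longrightarrow> link (S @ [q]) k = 2"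
        using IH(4) links[of 2] link_cases[of "S @ [q]" n] by blast
    next
      assume all: "\<forall>k. 2 \<le> k \<and> k < Suc n \<longrightarrow> link (S @ [q]) k = 2"
      then have "int (ZC1 S) = ZC1_max n"
        using IH(4) links[of 2] by blast
      with all_turn[OF all] d max_step show "int (ZC1 (S @ [q])) = ZC1_max (Suc n)"
        by simp
    qed
  qed
qed

lemma length_Li: "length (Li n) = n"
  by (simp add: Li_def)

lemma nth_Li: "i < n \<Longrightarrow> Li n ! i = (int i, 0)"
  by (simp add: Li_def)

lemma chain_Li: "is_polyomino_chain (Li n)"
  unfolding is_polyomino_chain_def length_Li by (auto simp: nth_Li)

lemma link_Li: "2 \<le> k \<Longrightarrow> k < n \<Longrightarrow> link (Li n) k = 1"
  by (simp add: link_def nth_Li of_nat_diff)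

lemma length_Zz: "length (Zz n) = n"
  by (simp add: Zz_def)

lemma nth_Zz: "i < n \<Longrightarrow> Zz n ! i = (int ((i + 1) div 2), int (i div 2))"
  by (simp add: Zz_def)

lemma nth_Zz_even: "2 * t < n \<Longrightarrow> Zz n ! (2 * t) = (int t, int t)"
proof -
  assume "2 * t < n"
  moreover have "(2 * t + 1) div 2 = t" "2 * t div 2 = t"
    by presburger+
  ultimately show ?thesis
    by (simp only: nth_Zz)
qed

lemma nth_Zz_odd: "2 * t + 1 < n \<Longrightarrow> Zz n ! (2 * t + 1) = (int t + 1, int t)"
proof -
  assume "2 * t + 1 < n"
  moreover have "(2 * t + 1 + 1) div 2 = t + 1" "(2 * t + 1) div 2 = t"
    by presburger+
  ultimately show ?thesis
    by (simp only: nth_Zz of_nat_add of_nat_1)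
qed

lemma nat_even_odd_cases:
  fixes i :: nat
  obtains t where "i = 2 * t" | t where "i = 2 * t + 1"
  by (cases "even i") (auto elim: evenE oddE)

lemma chain_Zz: "is_polyomino_chain (Zz n)"
  unfolding is_polyomino_chain_def length_Zz
proof (intro conjI allI impI)
  fix i assume i: "Suc i < n"
  show "\<bar>fst (Zz n ! i) - fst (Zz n ! Suc i)\<bar> + \<bar>snd (Zz n ! i) - snd (Zz n ! Suc i)\<bar> = 1"
  proof (cases i rule: nat_even_odd_cases)
    case (1 t)
    with i nth_Zz_even[of t n] nth_Zz_odd[of t n] show ?thesis
      by simp
  next
    case (2 t)
    with i nth_Zz_odd[of t n] nth_Zz_even[of "t + 1" n] show ?thesis
      by simp
  qed
next
  fix i j assume ij: "i + 2 = j \<and> j < n"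
  then show "Zz n ! i \<noteq> Zz n ! j"
  proof (cases i rule: nat_even_odd_cases)
    case (1 t)
    with ij nth_Zz_even[of t n] nth_Zz_even[of "t + 1" n] show ?thesis
      by simp
  next
    case (2 t)
    with ij nth_Zz_odd[of t n] nth_Zz_odd[of "t + 1" n] show ?thesis
      by simp
  qed
next
  fix i j assume ij: "i + 3 \<le> j \<and> j < n"
  define a where "a = int ((j + 1) div 2) - int ((i + 1) div 2)"
  define b where "b = int (j div 2) - int (i div 2)"
  have "(i + 1) div 2 \<le> (j + 1) div 2" "i div 2 \<le> j div 2"
    using ij by (simp_all add: div_le_mono)
  moreover have "(j + 1) div 2 + j div 2 = j" "(i + 1) div 2 + i div 2 = i"
    by presburger+
  ultimately have "0 \<le> a" "0 \<le> b" "3 \<le> a + b"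
    using ij unfolding a_def b_def by linarith+
  moreover have "fst (Zz n ! i) - fst (Zz n ! j) = - a" "snd (Zz n ! i) - snd (Zz n ! j) = - b"
    using ij by (simp_all add: nth_Zz a_def b_def)
  ultimately show "2 \<le> max \<bar>fst (Zz n ! i) - fst (Zz n ! j)\<bar> \<bar>snd (Zz n ! i) - snd (Zz n ! j)\<bar>"
    by (simp add: max_def)
qed

lemma link_Zz:
  assumes "2 \<le> k" "k < n"
  shows "link (Zz n) k = 2"
proof (cases k rule: nat_even_odd_cases)
  case (1 t)
  with assms have "t \<noteq> 0" "k - 1 = 2 * (t - 1) + 1" "k - 2 = 2 * (t - 1)"
    by auto
  with 1 assms nth_Zz_even[of t n] nth_Zz_odd[of "t - 1" n] nth_Zz_even[of "t - 1" n] show ?thesis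
    by (simp add: link_def of_nat_diff)
next
  case (2 t)
  with assms have "t \<noteq> 0" "k - 1 = 2 * t" "k - 2 = 2 * (t - 1) + 1"
    by auto
  with 2 assms nth_Zz_odd[of t n] nth_Zz_even[of t n] nth_Zz_odd[of "t - 1" n] show ?thesis
    by (simp add: link_def of_nat_diff)
qed

theorem proposition1:
  fixes n :: nat and S :: "square list"
  assumes "n \<ge> 3" and "is_polyomino_chain S" and "length S = n"
  shows "ZC1 (Li n) \<le> ZC1 S \<and> ZC1 S \<le> ZC1 (Zz n)
    \<and> (ZC1 S = ZC1 (Li n) \<longleftrightarrow> (\<forall>k. 2 \<le> k \<and> k < n \<longrightarrow> link S k = 1))
    \<and> (ZC1 S = ZC1 (Zz n) \<longleftrightarrow> (\<forall>k. 2 \<le> k \<and> k < n \<longrightarrow> link S k = 2))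
    \<and> ZC1 (Li n) = 32 * n - 44
    \<and> (n \<ge> 4 \<longrightarrow> ZC1 (Zz n) = 50 * n - 92)"
proof -
  have S: "32 * int n - 44 \<le> int (ZC1 S)" "int (ZC1 S) \<le> ZC1_max n"
    "int (ZC1 S) = 32 * int n - 44 \<longleftrightarrow> (\<forall>k. 2 \<le> k \<and> k < n \<longrightarrow> link S k = 1)"
    "int (ZC1 S) = ZC1_max n \<longleftrightarrow> (\<forall>k. 2 \<le> k \<and> k < n \<longrightarrow> link S k = 2)"
    using ZC1_bounds[OF assms] by blast+
  have Li: "int (ZC1 (Li n)) = 32 * int n - 44"
    using ZC1_bounds[OF assms(1) chain_Li length_Li] link_Li by blast
  have Zz: "int (ZC1 (Zz n)) = ZC1_max n"
    using ZC1_bounds[OF assms(1) chain_Zz length_Zz] link_Zz by blast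
  have "ZC1 (Li n) = 32 * n - 44"
    using Li assms(1) by linarith
  moreover have "ZC1 (Zz n) = 50 * n - 92" if "4 \<le> n"
    using Zz that by (simp add: ZC1_max_def)
  moreover have "ZC1 (Li n) \<le> ZC1 S" "ZC1 S \<le> ZC1 (Zz n)"
    using S(1,2) Li Zz by linarith+
  moreover have "ZC1 S = ZC1 (Li n) \<longleftrightarrow> (\<forall>k. 2 \<le> k \<and> k < n \<longrightarrow> link S k = 1)"
    unfolding S(3)[symmetric] Li[symmetric] by simp
  moreover have "ZC1 S = ZC1 (Zz n) \<longleftrightarrow> (\<forall>k. 2 \<le> k \<and> k < n \<longrightarrow> link S k = 2)"
    unfolding S(4)[symmetric] Zz[symmetric] by simp
  ultimately show ?thesis
    by blast
qed

end
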